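(* In the blowup/base-change setting below, fix $p\in\{0,\dots,P-1\}$ and suppose that there are no special fibers at $B^{p,p+1}$, i.e. $\Delta'$ contains a monomial not divisible by $e_p$ nor by $e_{p+1}$. Then for every positive integer $k$: (1) $\bar n_{kp+r}=(k-r)\,n_p+r\,n_{p+1}$ for $r=0,1,\dots,k$; (2) there are no special fibers at $\bar B^{\bar p,\bar p+1}$ for any $\bar p=kp,\dots,k(p+1)-1$.
   Context: Blowup setting. Let $f=f(s,t;u)$, $g=g(s,t;u)$ be complex polynomials, homogeneous in $(s,t)$ of degrees $8$ and $12$, defining a family of Weierstrass models $y^2=x^3+fxz^4+gz^6$ over $\mathbb P^1_{[s:t]}$ with parameter $u$; $\Delta:=4f^3+27g^2$. Let $a,b$ be the vanishing orders in $s$ at $s=0$ of $f,g$ for generic $u\ne0$ (not both $a\ge4$, $b\ge6$), and write $f=s^a\sum_i\mathcal F_i\,s^it^{8-a-i}$, $g=s^b\sum_j\mathcal G_j\,s^jt^{12-b-j}$. Assume the 3-fold vanishing orders of $(f,g,\Delta)$ at $(u,s)=(0,0)$ (largest $N$ with the function in $(u,s)^N$, $t=1$) are $(4+\alpha,6+\beta,12+\gamma)$ with $\alpha=0$ or $\beta=0$, and that this persists under all base changes $u\mapsto u^\ell$ (Classes 1–4). Blowup chain: $e_0:=u$; the $p$-th blowup substitutes $e_{p-1}\mapsto e_{p-1}e_p$, $s\mapsto se_p$ and divides $f,g,\Delta$ by $e_p^4,e_p^6,e_p^{12}$; $\mu_{q,i}$, $\nu_{q,j}$ are the vanishing orders in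 $e_q$ of the coefficients $\mathcal F_i(e_0,\dots)$, $\mathcal G_j(e_0,\dots)$; $P$ is the first number of blowups for which some $i<4-a$ with $\mathcal F_i\neq0$ has $\mu_{P,i}<4-a-i$ or some $j<6-b$ with $\mathcal G_j\ne0$ has $\nu_{P,j}<6-b-j$. Standing assumption: there is such an $i$ with $\mu_{P,i}=0$ or such a $j$ with $\nu_{P,j}=0$ (achievable by a preliminary base change). Base components $B^p=\{e_p=0\}$ form a chain, $B^{p,p+1}=\{e_p=e_{p+1}=0\}$. $n_p$ is the largest power of $e_p$ dividing $\Delta$ and $\Delta=\prod_qe_q^{n_q}\Delta'$. There is a special fiber at $B^{p,p+1}$ iff $\Delta'$ vanishes there, i.e. every monomial of $\Delta'$ is divisible by $e_p$ or $e_{p+1}$. Base change: for a positive integer $k$, the barred configuration $\bar{\mathcal Y}$ is obtained by substituting $u\mapsto u^k$ in $f,g$ and then performing the blowup chain, which now consists of $\bar P=kP$ blowups with coordinates $\bar e_0,\dots,\bar e_{\bar P}$; $\bar B^{\bar p}$, $\bar B^{\bar p,\bar p+1}$, $\bar n_{\bar p}$, $\bar\Delta'$ are defined analogously. *)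

theory Defs
  imports Complex_Main "HOL-Library.Poly_Mapping" "HOL-Library.Extended_Nat"
begin

text \<open>Polynomials in the variables s, t, e_0 (= u), e_1, e_2, ...\<close>

type_synonym mono = "nat \<Rightarrow>\<^sub>0 nat"
type_synonym mpoly = "mono \<Rightarrow>\<^sub>0 complex"

definition sv :: nat where "sv = 0"
definition tv :: nat where "tv = 1"
definition ev :: "nat \<Rightarrow> nat" where "ev q = q + 2"

definition relabel :: "(mono \<Rightarrow> mono) \<Rightarrow> mpoly \<Rightarrow> mpoly" where
  "relabel \<phi> F = (\<Sum>m\<in>Poly_Mapping.keys F. Poly_Mapping.single (\<phi> m) (Poly_Mapping.lookup F m))"

definition disc :: "mpoly \<Rightarrow> mpoly \<Rightarrow> mpoly" where
  "disc f g = 4 * f ^ 3 + 27 * g ^ 2"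

text \<open>Base change u \<mapsto> u^k (u = e_0).\<close>
definition bc :: "nat \<Rightarrow> mpoly \<Rightarrow> mpoly" where
  "bc k F = relabel (\<lambda>m. m + Poly_Mapping.single (ev 0) ((k - 1) * Poly_Mapping.lookup m (ev 0))) F"

text \<open>p-th blowup (p \<ge> 1): substitute e_{p-1} \<mapsto> e_{p-1} e_p, s \<mapsto> s e_p ...\<close>
definition subst_blow :: "nat \<Rightarrow> mpoly \<Rightarrow> mpoly" where
  "subst_blow p F = relabel
     (\<lambda>m. m + Poly_Mapping.single (ev p) (Poly_Mapping.lookup m (ev (p - 1)) + Poly_Mapping.lookup m sv)) F"

text \<open>... and divide by (variable v)^w (exact in the setting considered).\<close>
definition div_var :: "nat \<Rightarrow> nat \<Rightarrow> mpoly \<Rightarrow> mpoly" where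
  "div_var v w F = relabel (\<lambda>m. m - Poly_Mapping.single v w) F"

text \<open>Blowup chain of p blowups, dividing by e_q^w at the q-th blowup
  (w = 4, 6, 12 for f, g, Delta).\<close>
fun blow_chain :: "nat \<Rightarrow> nat \<Rightarrow> mpoly \<Rightarrow> mpoly" where
  "blow_chain w 0 F = F"
| "blow_chain w (Suc p) F = div_var (ev (Suc p)) w (subst_blow (Suc p) (blow_chain w p F))"

text \<open>Vanishing order in the variable v (minimal exponent of v; for F \<noteq> 0).\<close>
definition vord :: "nat \<Rightarrow> mpoly \<Rightarrow> nat" where
  "vord v F = Min ((\<lambda>m. Poly_Mapping.lookup m v) ` Poly_Mapping.keys F)"

definition ord_s :: "mpoly \<Rightarrow> enat" where
  "ord_s F = (if F = 0 then \<infinity> else enat (vord sv F))"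

text \<open>3-fold vanishing order at (u,s) = (0,0) (with t = 1): largest N with
  F in (u,s)^N, i.e. minimal total degree in u and s; infinite for F = 0.\<close>
definition ord_us :: "mpoly \<Rightarrow> enat" where
  "ord_us F = (if F = 0 then \<infinity>
     else enat (Min ((\<lambda>m. Poly_Mapping.lookup m sv + Poly_Mapping.lookup m (ev 0)) ` Poly_Mapping.keys F)))"

definition st_coeff :: "nat \<Rightarrow> nat \<Rightarrow> mpoly \<Rightarrow> mpoly" where
  "st_coeff j l F = (\<Sum>m\<in>{m\<in>Poly_Mapping.keys F. Poly_Mapping.lookup m sv = j \<and> Poly_Mapping.lookup m tv = l}.
      Poly_Mapping.single (m - Poly_Mapping.single sv j - Poly_Mapping.single tv l) (Poly_Mapping.lookup F m))"

definition class_cond :: "mpoly \<Rightarrow> mpoly \<Rightarrow> bool" where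
  "class_cond f g \<longleftrightarrow> (\<exists>\<alpha> \<beta> \<gamma> :: enat.
      ord_us f = 4 + \<alpha> \<and> ord_us g = 6 + \<beta> \<and> ord_us (disc f g) = 12 + \<gamma> \<and>
      (\<alpha> = 0 \<or> \<beta> = 0))"

text \<open>The condition defining P, after q blowups.  Here j = a + i (resp. b + j
  in the paper), so that 4 - a - i = 4 - j and i < 4 - a iff j < 4.\<close>
definition drop_cond :: "mpoly \<Rightarrow> mpoly \<Rightarrow> nat \<Rightarrow> bool" where
  "drop_cond f g q \<longleftrightarrow>
     (\<exists>j<4. st_coeff j (8 - j) f \<noteq> 0 \<and>
            vord (ev q) (st_coeff j (8 - j) (blow_chain 4 q f)) < 4 - j) \<or>
     (\<exists>j<6. st_coeff j (12 - j) g \<noteq> 0 \<and>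
            vord (ev q) (st_coeff j (12 - j) (blow_chain 6 q g)) < 6 - j)"

definition standing :: "mpoly \<Rightarrow> mpoly \<Rightarrow> nat \<Rightarrow> bool" where
  "standing f g P \<longleftrightarrow>
     (\<exists>j<4. st_coeff j (8 - j) f \<noteq> 0 \<and>
            vord (ev P) (st_coeff j (8 - j) (blow_chain 4 P f)) = 0) \<or>
     (\<exists>j<6. st_coeff j (12 - j) g \<noteq> 0 \<and>
            vord (ev P) (st_coeff j (12 - j) (blow_chain 6 P g)) = 0)"

definition Dfin :: "nat \<Rightarrow> mpoly \<Rightarrow> mpoly \<Rightarrow> mpoly" where
  "Dfin Pn f g = blow_chain 12 Pn (disc f g)"

definition nexp :: "nat \<Rightarrow> mpoly \<Rightarrow> mpoly \<Rightarrow> nat \<Rightarrow> nat" where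
  "nexp Pn f g q = vord (ev q) (Dfin Pn f g)"

definition Dprime :: "nat \<Rightarrow> mpoly \<Rightarrow> mpoly \<Rightarrow> mpoly" where
  "Dprime Pn f g = relabel
     (\<lambda>m. m - (\<Sum>q\<le>Pn. Poly_Mapping.single (ev q) (nexp Pn f g q))) (Dfin Pn f g)"

definition special_fiber :: "nat \<Rightarrow> mpoly \<Rightarrow> mpoly \<Rightarrow> nat \<Rightarrow> bool" where
  "special_fiber Pn f g p \<longleftrightarrow>
     (\<forall>m\<in>Poly_Mapping.keys (Dprime Pn f g). Poly_Mapping.lookup m (ev p) \<noteq> 0 \<or> Poly_Mapping.lookup m (ev (Suc p)) \<noteq> 0)"

definition stu_homog :: "nat \<Rightarrow> mpoly \<Rightarrow> bool" where
  "stu_homog d F \<longleftrightarrow> (\<forall>m\<in>Poly_Mapping.keys F. Poly_Mapping.keys m \<subseteq> {sv, tv, ev 0} \<and> Poly_Mapping.lookup m sv + Poly_Mapping.lookup m tv = d)"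

end

theory Submission
  imports Defs
begin

text \<open>Before the \<open>P\<close>-th blowup no coefficient drops, which forces every blowup of the chain to be
  an exact monomial substitution on \<open>f\<close> and \<open>g\<close>, hence on \<open>\<Delta>\<close>: a monomial \<open>s\<^sup>a t\<^sup>b u\<^sup>c\<close> of
  weight \<open>w\<close> acquires the \<open>e\<^sub>r\<close>-exponent \<open>c + r (a - w)\<close>. So \<open>n\<^sub>q\<close> is the minimum over the
  monomials of \<open>\<Delta>\<close> of functions affine in \<open>q\<close>, and the absence of a special fiber at \<open>B\<^sup>p\<^sup>,\<^sup>p\<^sup>+\<^sup>1\<close>
  means that a single monomial attains the minimum at both \<open>q = p\<close> and \<open>q = p + 1\<close>.
  The base change \<open>u \<mapsto> u\<^sup>k\<close> replaces \<open>c\<close> by \<open>k c\<close>, so the exponent at \<open>q = k p + r\<close> becomes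
  \<open>(k - r)\<close> times the one at \<open>p\<close> plus \<open>r\<close> times the one at \<open>p + 1\<close>. The same monomial
  minimises all these convex combinations, which yields both claims.\<close>

lemma relabel_superset:
  assumes "finite A" "Poly_Mapping.keys F \<subseteq> A"
  shows "relabel \<phi> F = (\<Sum>m\<in>A. Poly_Mapping.single (\<phi> m) (Poly_Mapping.lookup F m))"
  unfolding relabel_def
  by (rule sum.mono_neutral_left) (use assms in \<open>auto simp: in_keys_iff\<close>)

lemma relabel_zero [simp]: "relabel \<phi> 0 = 0"
  by (simp add: relabel_def)

lemma relabel_add: "relabel \<phi> (F + G) = relabel \<phi> F + relabel \<phi> G"
proof -
  let ?A = "Poly_Mapping.keys F \<union> Poly_Mapping.keys G"
  have "relabel \<phi> (F + G) = (\<Sum>m\<in>?A. Poly_Mapping.single (\<phi> m) (Poly_Mapping.lookup (F + G) m))"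
    by (rule relabel_superset) (use keys_add[of F G] in auto)
  also have "\<dots> = (\<Sum>m\<in>?A. Poly_Mapping.single (\<phi> m) (Poly_Mapping.lookup F m))
     + (\<Sum>m\<in>?A. Poly_Mapping.single (\<phi> m) (Poly_Mapping.lookup G m))"
    by (simp add: lookup_add single_add sum.distrib)
  also have "\<dots> = relabel \<phi> F + relabel \<phi> G"
    by (subst (1 2) relabel_superset[of ?A]) auto
  finally show ?thesis .
qed

lemma relabel_sum: "finite I \<Longrightarrow> relabel \<phi> (\<Sum>i\<in>I. H i) = (\<Sum>i\<in>I. relabel \<phi> (H i))"
  by (induction I rule: finite_induct) (auto simp: relabel_add)

lemma relabel_single: "relabel \<phi> (Poly_Mapping.single k c) = Poly_Mapping.single (\<phi> k) c"
  by (subst relabel_superset[of "{k}"]) auto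

lemma relabel_comp: "relabel \<phi> (relabel \<psi> F) = relabel (\<phi> \<circ> \<psi>) F"
  unfolding relabel_def[of \<psi>] relabel_def[of "\<phi> \<circ> \<psi>"]
  by (simp add: relabel_sum relabel_single)

lemma relabel_cong:
  "(\<And>m. m \<in> Poly_Mapping.keys F \<Longrightarrow> \<phi> m = \<psi> m) \<Longrightarrow> relabel \<phi> F = relabel \<psi> F"
  unfolding relabel_def by (rule sum.cong) auto

lemma sum_single_keys: "(\<Sum>m\<in>Poly_Mapping.keys F. Poly_Mapping.single m (Poly_Mapping.lookup F m)) = F"
  by (rule poly_mapping_eqI) (simp add: lookup_sum lookup_single when_def in_keys_iff)

lemma relabel_id: "relabel (\<lambda>m. m) F = F"
  unfolding relabel_def by (rule sum_single_keys)

lemma relabel_mult: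
  assumes hom: "\<And>x y. \<psi> (x + y) = \<psi> x + \<psi> y"
  shows "relabel \<psi> (F * G) = relabel \<psi> F * relabel \<psi> (G :: mpoly)"
proof -
  have "F * G = (\<Sum>m\<in>Poly_Mapping.keys F. \<Sum>n\<in>Poly_Mapping.keys G.
      Poly_Mapping.single (m + n) (Poly_Mapping.lookup F m * Poly_Mapping.lookup G n))"
    by (subst (1) sum_single_keys[symmetric], subst (1) sum_single_keys[symmetric])
      (simp add: sum_product mult_single)
  then have "relabel \<psi> (F * G) = (\<Sum>m\<in>Poly_Mapping.keys F. \<Sum>n\<in>Poly_Mapping.keys G.
      Poly_Mapping.single (\<psi> m + \<psi> n) (Poly_Mapping.lookup F m * Poly_Mapping.lookup G n))"
    by (simp add: relabel_sum relabel_single hom)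
  also have "\<dots> = relabel \<psi> F * relabel \<psi> G"
    unfolding relabel_def by (simp add: sum_product mult_single)
  finally show ?thesis .
qed

lemma relabel_numeral: "\<psi> 0 = 0 \<Longrightarrow> relabel \<psi> (numeral n :: mpoly) = numeral n"
  using relabel_single[of \<psi> 0 "numeral n"] by simp

lemma relabel_disc:
  assumes "\<And>x y. \<psi> (x + y) = \<psi> x + \<psi> y" and "\<psi> 0 = 0"
  shows "relabel \<psi> (disc f g) = disc (relabel \<psi> f) (relabel \<psi> g)"
  unfolding disc_def power3_eq_cube power2_eq_square
  by (simp add: relabel_add relabel_mult[OF assms(1)] relabel_numeral assms(2))

lemma keys_relabel_subset: "Poly_Mapping.keys (relabel \<phi> F) \<subseteq> \<phi> ` Poly_Mapping.keys F"
  unfolding relabel_def by (rule order.trans[OF keys_sum]) auto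

lemma lookup_sum_single_inj:
  assumes "finite A" "inj_on \<phi> A" "x \<in> A"
  shows "Poly_Mapping.lookup (\<Sum>m\<in>A. Poly_Mapping.single (\<phi> m) (h m)) (\<phi> x) = h x"
proof -
  have "Poly_Mapping.lookup (\<Sum>m\<in>A. Poly_Mapping.single (\<phi> m) (h m)) (\<phi> x)
     = (\<Sum>m\<in>A. if m = x then h m else 0)"
    unfolding lookup_sum lookup_single
    by (rule sum.cong) (use assms in \<open>auto simp: when_def inj_on_def\<close>)
  then show ?thesis using assms by simp
qed

lemma lookup_relabel_inj:
  "inj_on \<phi> (Poly_Mapping.keys F) \<Longrightarrow> x \<in> Poly_Mapping.keys F \<Longrightarrow>
   Poly_Mapping.lookup (relabel \<phi> F) (\<phi> x) = Poly_Mapping.lookup F x"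
  unfolding relabel_def by (rule lookup_sum_single_inj) auto

lemma keys_relabel_inj:
  assumes "inj_on \<phi> (Poly_Mapping.keys F)"
  shows "Poly_Mapping.keys (relabel \<phi> F) = \<phi> ` Poly_Mapping.keys F"
proof
  show "\<phi> ` Poly_Mapping.keys F \<subseteq> Poly_Mapping.keys (relabel \<phi> F)"
    using lookup_relabel_inj[OF assms] by (auto simp: in_keys_iff)
qed (rule keys_relabel_subset)

lemma vord_le: "m \<in> Poly_Mapping.keys F \<Longrightarrow> vord v F \<le> Poly_Mapping.lookup m v"
  unfolding vord_def by (rule Min_le) auto

lemma vord_relabel_inj:
  "inj_on \<phi> (Poly_Mapping.keys F) \<Longrightarrow>
   vord v (relabel \<phi> F) = Min ((\<lambda>m. Poly_Mapping.lookup (\<phi> m) v) ` Poly_Mapping.keys F)"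
  unfolding vord_def by (simp add: keys_relabel_inj image_image)

lemma inj_on_minus_poly_mapping:
  assumes "\<And>y z. y \<in> K \<Longrightarrow> Poly_Mapping.lookup N z \<le> Poly_Mapping.lookup y z"
  shows "inj_on (\<lambda>y. y - N) (K :: mono set)"
proof (rule inj_onI)
  fix x y assume x: "x \<in> K" and y: "y \<in> K" and e: "x - N = y - N"
  show "x = y"
  proof (rule poly_mapping_eqI)
    fix z
    have "Poly_Mapping.lookup x z - Poly_Mapping.lookup N z = Poly_Mapping.lookup y z - Poly_Mapping.lookup N z"
      using arg_cong[OF e, of "\<lambda>m. Poly_Mapping.lookup m z"] by (simp add: lookup_minus)
    with assms[OF x, of z] assms[OF y, of z]
    show "Poly_Mapping.lookup x z = Poly_Mapping.lookup y z" by linarith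
  qed
qed

lemma Min_lincomb_at_common_minimizer:
  fixes X Y :: "'a \<Rightarrow> nat"
  assumes "finite S" "m0 \<in> S" "\<And>m. m \<in> S \<Longrightarrow> X m0 \<le> X m" "\<And>m. m \<in> S \<Longrightarrow> Y m0 \<le> Y m"
  shows "Min ((\<lambda>m. a * X m + b * Y m) ` S) = a * X m0 + b * Y m0"
  using assms by (intro Min_eqI) (auto intro: add_mono mult_le_mono2)

text \<open>Variable indices: \<open>s = 0\<close>, \<open>t = 1\<close>, \<open>e\<^sub>q = q + 2\<close>, so \<open>u = e\<^sub>0\<close> has index \<open>2\<close>.
  Blowup \<open>r\<close> multiplies by \<open>e\<^sub>r\<close> to the power (exponent of \<open>e\<^sub>r\<^sub>-\<^sub>1\<close>) + (exponent of \<open>s\<close>) \<open>- w\<close>,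
  and never changes the exponent of \<open>s\<close>; this recursion is solved by \<open>blowup_exp\<close>.\<close>

definition blowup_exp :: "nat \<Rightarrow> nat \<Rightarrow> mono \<Rightarrow> int" where
  "blowup_exp w r m = int (Poly_Mapping.lookup m 2) + int r * (int (Poly_Mapping.lookup m 0) - int w)"

definition blowup_mono :: "nat \<Rightarrow> nat \<Rightarrow> mono \<Rightarrow> mono" where
  "blowup_mono w q m = m + (\<Sum>r\<in>{1..q}. Poly_Mapping.single (r + 2) (nat (blowup_exp w r m)))"

definition stu_mono :: "mono \<Rightarrow> bool" where
  "stu_mono m \<longleftrightarrow> (\<forall>z\<ge>3. Poly_Mapping.lookup m z = 0)"

definition blowup_exact :: "nat \<Rightarrow> nat \<Rightarrow> mpoly \<Rightarrow> bool" where
  "blowup_exact w q F \<longleftrightarrow> (\<forall>m\<in>Poly_Mapping.keys F. stu_mono m \<and> 0 \<le> blowup_exp w q m)"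

lemma blowup_exp_Suc:
  "blowup_exp w (Suc q) m = blowup_exp w q m + (int (Poly_Mapping.lookup m 0) - int w)"
  by (simp add: blowup_exp_def algebra_simps)

lemma blowup_exp_add: "blowup_exp (w1 + w2) r (x + y) = blowup_exp w1 r x + blowup_exp w2 r y"
  by (simp add: blowup_exp_def lookup_add algebra_simps)

lemma blowup_exp_nonneg_le:
  assumes "0 \<le> blowup_exp w q m" "r \<le> q"
  shows "0 \<le> blowup_exp w r m"
proof (cases "int w \<le> int (Poly_Mapping.lookup m 0)")
  case False
  then have "int q * (int (Poly_Mapping.lookup m 0) - int w) \<le> int r * (int (Poly_Mapping.lookup m 0) - int w)"
    using assms(2) by (intro mult_right_mono_neg) auto
  with assms(1) show ?thesis by (simp add: blowup_exp_def)
qed (simp add: blowup_exp_def)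

lemma blowup_exact_le: "blowup_exact w q F \<Longrightarrow> r \<le> q \<Longrightarrow> blowup_exact w r F"
  unfolding blowup_exact_def using blowup_exp_nonneg_le by blast

lemma lookup_blowup_mono: "Poly_Mapping.lookup (blowup_mono w q m) z =
   Poly_Mapping.lookup m z + (if 3 \<le> z \<and> z \<le> q + 2 then nat (blowup_exp w (z - 2) m) else 0)"
proof (induction q)
  case (Suc q)
  have "blowup_mono w (Suc q) m
      = blowup_mono w q m + Poly_Mapping.single (Suc q + 2) (nat (blowup_exp w (Suc q) m))"
    by (simp add: blowup_mono_def atLeastAtMostSuc_conv add_ac)
  then show ?case
    using Suc.IH by (cases "Suc q + 2 = z") (auto simp: lookup_add lookup_single when_def)
qed (simp add: blowup_mono_def)

lemma lookup_blowup_mono_ev: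
  "stu_mono m \<Longrightarrow> r \<le> q \<Longrightarrow> Poly_Mapping.lookup (blowup_mono w q m) (ev r) = nat (blowup_exp w r m)"
  by (cases r) (auto simp: lookup_blowup_mono ev_def stu_mono_def blowup_exp_def numeral_2_eq_2)

lemma inj_blowup_mono: "inj (blowup_mono w q)"
proof (rule injI)
  fix m m' assume h: "blowup_mono w q m = blowup_mono w q m'"
  have "Poly_Mapping.lookup m z = Poly_Mapping.lookup m' z" if "z \<in> {0, 2}" for z
    using that arg_cong[OF h, of "\<lambda>x. Poly_Mapping.lookup x z"] by (auto simp: lookup_blowup_mono)
  then have E: "blowup_exp w r m = blowup_exp w r m'" for r
    by (simp add: blowup_exp_def)
  show "m = m'"
  proof (rule poly_mapping_eqI)
    fix z show "Poly_Mapping.lookup m z = Poly_Mapping.lookup m' z"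
      using arg_cong[OF h, of "\<lambda>x. Poly_Mapping.lookup x z"] unfolding lookup_blowup_mono E by simp
  qed
qed

lemma blowup_mono_Suc:
  assumes "stu_mono m" "0 \<le> blowup_exp w (Suc q) m"
  shows "blowup_mono w q m + Poly_Mapping.single (ev (Suc q))
      (Poly_Mapping.lookup (blowup_mono w q m) (ev q) + Poly_Mapping.lookup (blowup_mono w q m) sv)
     - Poly_Mapping.single (ev (Suc q)) w = blowup_mono w (Suc q) m"
proof (rule poly_mapping_eqI)
  have q: "0 \<le> blowup_exp w q m" using assms(2) blowup_exp_nonneg_le by simp
  have "Poly_Mapping.lookup (blowup_mono w q m) (ev q) + Poly_Mapping.lookup (blowup_mono w q m) sv - w
      = nat (blowup_exp w (Suc q) m)"
    using q assms(2) blowup_exp_Suc[of w q m]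
    by (simp add: lookup_blowup_mono_ev[OF assms(1)]) (simp add: lookup_blowup_mono sv_def)
  then show "Poly_Mapping.lookup (blowup_mono w q m + Poly_Mapping.single (ev (Suc q))
      (Poly_Mapping.lookup (blowup_mono w q m) (ev q) + Poly_Mapping.lookup (blowup_mono w q m) sv)
     - Poly_Mapping.single (ev (Suc q)) w) z = Poly_Mapping.lookup (blowup_mono w (Suc q) m) z" for z
    using assms(1) by (auto simp: lookup_add lookup_minus lookup_single when_def lookup_blowup_mono
        stu_mono_def ev_def)
qed

lemma blow_chain_eq_relabel:
  "blowup_exact w q F \<Longrightarrow> blow_chain w q F = relabel (blowup_mono w q) F"
proof (induction q)
  case 0
  have "blowup_mono w 0 = (\<lambda>m. m)" by (simp add: blowup_mono_def fun_eq_iff)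
  then show ?case by (simp add: relabel_id)
next
  case (Suc q)
  have "blow_chain w (Suc q) F = div_var (ev (Suc q)) w (subst_blow (Suc q) (relabel (blowup_mono w q) F))"
    using Suc blowup_exact_le[of w "Suc q" F q] by simp
  also have "\<dots> = relabel (blowup_mono w (Suc q)) F"
    unfolding div_var_def subst_blow_def relabel_comp
    by (rule relabel_cong) (use Suc.prems blowup_mono_Suc in \<open>auto simp: blowup_exact_def\<close>)
  finally show ?case .
qed

lemma stu_homog_stu_mono:
  assumes "stu_homog d F" "m \<in> Poly_Mapping.keys F"
  shows "stu_mono m"
proof -
  have "Poly_Mapping.keys m \<subseteq> {0, 1, 2}"
    using assms unfolding stu_homog_def sv_def tv_def ev_def by (auto simp: numeral_2_eq_2)
  then show ?thesis unfolding stu_mono_def by (auto simp: in_keys_iff)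
qed

lemma lookup_st_coeff:
  assumes "x \<in> Poly_Mapping.keys F" "Poly_Mapping.lookup x sv = j" "Poly_Mapping.lookup x tv = l"
  shows "Poly_Mapping.lookup (st_coeff j l F)
      (x - Poly_Mapping.single sv j - Poly_Mapping.single tv l) = Poly_Mapping.lookup F x"
proof -
  let ?M = "{m\<in>Poly_Mapping.keys F. Poly_Mapping.lookup m sv = j \<and> Poly_Mapping.lookup m tv = l}"
  have "inj_on (\<lambda>m. m - Poly_Mapping.single sv j - Poly_Mapping.single tv l) ?M"
  proof (rule inj_onI, rule poly_mapping_eqI)
    fix m m' z
    assume "m \<in> ?M" "m' \<in> ?M"
      and "m - Poly_Mapping.single sv j - Poly_Mapping.single tv l
         = m' - Poly_Mapping.single sv j - Poly_Mapping.single tv l"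
    then show "Poly_Mapping.lookup m z = Poly_Mapping.lookup m' z"
      by (cases "z = sv \<or> z = tv")
        (auto simp: lookup_minus lookup_single when_def sv_def tv_def dest: arg_cong[where f = "\<lambda>x. Poly_Mapping.lookup x z"])
  qed
  moreover have "x \<in> ?M" using assms by simp
  ultimately show ?thesis
    unfolding st_coeff_def by (intro lookup_sum_single_inj) auto
qed

lemma st_coeff_blow_chain:
  assumes hom: "stu_homog d F" and exact: "blowup_exact w q F" and m: "m \<in> Poly_Mapping.keys F"
    and a: "Poly_Mapping.lookup m sv = a"
  shows "st_coeff a (d - a) F \<noteq> 0"
    and "vord (ev q) (st_coeff a (d - a) (blow_chain w q F)) \<le> nat (blowup_exp w q m)"
proof -
  have t: "Poly_Mapping.lookup m tv = d - a"
    using hom m a unfolding stu_homog_def by auto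
  have "Poly_Mapping.lookup (st_coeff a (d - a) F)
      (m - Poly_Mapping.single sv a - Poly_Mapping.single tv (d - a)) \<noteq> 0"
    unfolding lookup_st_coeff[OF m a t] using m by (simp add: in_keys_iff)
  then show "st_coeff a (d - a) F \<noteq> 0" by auto
  let ?m' = "blowup_mono w q m"
  let ?k = "?m' - Poly_Mapping.single sv a - Poly_Mapping.single tv (d - a)"
  have key: "?m' \<in> Poly_Mapping.keys (blow_chain w q F)"
    unfolding blow_chain_eq_relabel[OF exact]
    using m inj_blowup_mono[of w q] by (simp add: keys_relabel_inj inj_on_subset[of _ UNIV])
  have "Poly_Mapping.lookup ?m' sv = a" "Poly_Mapping.lookup ?m' tv = d - a"
    using a t by (simp_all add: lookup_blowup_mono sv_def tv_def)
  from lookup_st_coeff[OF key this] key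
  have "?k \<in> Poly_Mapping.keys (st_coeff a (d - a) (blow_chain w q F))"
    by (simp add: in_keys_iff)
  then have "vord (ev q) (st_coeff a (d - a) (blow_chain w q F)) \<le> Poly_Mapping.lookup ?k (ev q)"
    by (rule vord_le)
  also have "\<dots> = Poly_Mapping.lookup ?m' (ev q)"
    by (simp add: lookup_minus lookup_single sv_def tv_def ev_def)
  also have "\<dots> = nat (blowup_exp w q m)"
    using exact m by (simp add: lookup_blowup_mono_ev blowup_exact_def)
  finally show "vord (ev q) (st_coeff a (d - a) (blow_chain w q F)) \<le> nat (blowup_exp w q m)" .
qed

text \<open>Before the \<open>P\<close>-th blowup, the order of \<open>e\<^sub>q\<close> in the coefficient of \<open>s\<^sup>a\<close> (\<open>a < w\<close>) is at
  least \<open>w - a\<close>, so the next blowup keeps every exponent nonnegative.\<close>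

lemma blowup_exact_before_drop:
  assumes hom: "stu_homog d F"
    and no_drop: "\<forall>q<P. \<not> (\<exists>j<w. st_coeff j (d - j) F \<noteq> 0 \<and>
        vord (ev q) (st_coeff j (d - j) (blow_chain w q F)) < w - j)"
  shows "blowup_exact w P F"
  using no_drop
proof (induction P)
  case 0
  then show ?case
    using stu_homog_stu_mono[OF hom] by (simp add: blowup_exact_def blowup_exp_def)
next
  case (Suc P)
  then have exact: "blowup_exact w P F" by simp
  have "0 \<le> blowup_exp w (Suc P) m" if m: "m \<in> Poly_Mapping.keys F" for m
  proof (cases "w \<le> Poly_Mapping.lookup m sv")
    case False
    note coeff = st_coeff_blow_chain[OF hom exact m refl]
    have "\<not> vord (ev P) (st_coeff (Poly_Mapping.lookup m sv) (d - Poly_Mapping.lookup m sv)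
        (blow_chain w P F)) < w - Poly_Mapping.lookup m sv"
      using Suc.prems[rule_format, OF lessI] coeff(1) False by (meson not_le)
    with coeff(2) have "w - Poly_Mapping.lookup m sv \<le> nat (blowup_exp w P m)" by linarith
    with False show ?thesis by (simp add: blowup_exp_Suc sv_def)
  qed (use exact m in \<open>simp add: blowup_exp_Suc blowup_exact_def sv_def\<close>)
  then show ?case using exact by (simp add: blowup_exact_def)
qed

lemma blowup_exact_add:
  "blowup_exact w q F \<Longrightarrow> blowup_exact w q G \<Longrightarrow> blowup_exact w q (F + G)"
  using keys_add[of F G] unfolding blowup_exact_def by blast

lemma blowup_exact_mult:
  assumes "blowup_exact w1 q F" "blowup_exact w2 q G"
  shows "blowup_exact (w1 + w2) q (F * G)"
  unfolding blowup_exact_def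
proof
  fix m assume "m \<in> Poly_Mapping.keys (F * G)"
  then obtain x y where "x \<in> Poly_Mapping.keys F" "y \<in> Poly_Mapping.keys G" "m = x + y"
    using keys_mult[of F G] by blast
  with assms show "stu_mono m \<and> 0 \<le> blowup_exp (w1 + w2) q m"
    by (auto simp: blowup_exact_def stu_mono_def blowup_exp_add lookup_add)
qed

lemma blowup_exact_numeral: "blowup_exact 0 q (numeral n)"
proof -
  have "(numeral n :: mpoly) = Poly_Mapping.single 0 (numeral n)" by simp
  then have "Poly_Mapping.keys (numeral n :: mpoly) \<subseteq> {0}" by (metis keys_single order_refl empty_subsetI)
  then show ?thesis by (auto simp: blowup_exact_def stu_mono_def blowup_exp_def)
qed

lemma blowup_exact_disc:
  assumes f: "blowup_exact 4 q f" and g: "blowup_exact 6 q g"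
  shows "blowup_exact 12 q (disc f g)"
proof -
  have "blowup_exact (0 + (4 + (4 + 4))) q (4 * (f * (f * f)))"
    by (intro blowup_exact_mult blowup_exact_numeral f)
  moreover have "blowup_exact (0 + (6 + 6)) q (27 * (g * g))"
    by (intro blowup_exact_mult blowup_exact_numeral g)
  ultimately show ?thesis
    unfolding disc_def power3_eq_cube power2_eq_square
    by (intro blowup_exact_add) (simp_all only: mult.assoc add_0 semiring_norm)
qed

lemma Dfin_eq_relabel:
  "blowup_exact 12 P (disc f g) \<Longrightarrow> Dfin P f g = relabel (blowup_mono 12 P) (disc f g)"
  unfolding Dfin_def by (rule blow_chain_eq_relabel)

lemma keys_Dfin:
  "blowup_exact 12 P (disc f g) \<Longrightarrow>
   Poly_Mapping.keys (Dfin P f g) = blowup_mono 12 P ` Poly_Mapping.keys (disc f g)"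
  by (simp add: Dfin_eq_relabel keys_relabel_inj inj_on_subset[OF inj_blowup_mono])

lemma nexp_eq_Min:
  assumes exact: "blowup_exact 12 P (disc f g)" and "q \<le> P"
  shows "nexp P f g q = Min ((\<lambda>m. nat (blowup_exp 12 q m)) ` Poly_Mapping.keys (disc f g))"
proof -
  have "nexp P f g q
      = Min ((\<lambda>m. Poly_Mapping.lookup (blowup_mono 12 P m) (ev q)) ` Poly_Mapping.keys (disc f g))"
    unfolding nexp_def Dfin_eq_relabel[OF exact]
    by (rule vord_relabel_inj) (simp add: inj_on_subset[OF inj_blowup_mono])
  also have "\<dots> = Min ((\<lambda>m. nat (blowup_exp 12 q m)) ` Poly_Mapping.keys (disc f g))"
    using exact assms(2) by (intro arg_cong[where f = Min] image_cong)
      (auto simp: blowup_exact_def lookup_blowup_mono_ev)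
  finally show ?thesis .
qed

lemma nexp_le:
  "blowup_exact 12 P (disc f g) \<Longrightarrow> q \<le> P \<Longrightarrow> m \<in> Poly_Mapping.keys (disc f g) \<Longrightarrow>
   nexp P f g q \<le> nat (blowup_exp 12 q m)"
  by (simp add: nexp_eq_Min)

lemma lookup_sum_single_ev:
  "Poly_Mapping.lookup (\<Sum>q\<le>n. Poly_Mapping.single (ev q) (h q)) z =
    (if 2 \<le> z \<and> z - 2 \<le> n then h (z - 2) else 0)"
  by (induction n) (auto simp: lookup_add lookup_single ev_def when_def)

text \<open>A monomial of \<open>\<Delta>'\<close> avoids \<open>e\<^sub>p\<close> exactly when the monomial of \<open>\<Delta>\<close> it comes from attains
  the minimal \<open>e\<^sub>p\<close>-exponent \<open>n\<^sub>p\<close>.\<close>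

lemma not_special_fiber_iff:
  assumes exact: "blowup_exact 12 P (disc f g)" and p: "p < P"
  shows "\<not> special_fiber P f g p \<longleftrightarrow>
    (\<exists>m\<in>Poly_Mapping.keys (disc f g).
       nat (blowup_exp 12 p m) = nexp P f g p \<and> nat (blowup_exp 12 (Suc p) m) = nexp P f g (Suc p))"
proof -
  define N where "N = (\<Sum>q\<le>P. Poly_Mapping.single (ev q) (nexp P f g q))"
  have "Poly_Mapping.lookup N z \<le> Poly_Mapping.lookup y z"
    if "y \<in> Poly_Mapping.keys (Dfin P f g)" for y z
  proof (cases "2 \<le> z \<and> z - 2 \<le> P")
    case True
    then have "ev (z - 2) = z" unfolding ev_def by arith
    with True vord_le[OF that, of z] show ?thesis
      by (simp add: N_def lookup_sum_single_ev nexp_def)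
  qed (auto simp: N_def lookup_sum_single_ev)
  then have "Poly_Mapping.keys (Dprime P f g) = (\<lambda>y. y - N) ` Poly_Mapping.keys (Dfin P f g)"
    unfolding Dprime_def N_def[symmetric] by (intro keys_relabel_inj inj_on_minus_poly_mapping)
  then have keys: "Poly_Mapping.keys (Dprime P f g)
      = (\<lambda>m. blowup_mono 12 P m - N) ` Poly_Mapping.keys (disc f g)"
    by (simp add: keys_Dfin[OF exact] image_image)
  have zero: "Poly_Mapping.lookup (blowup_mono 12 P m - N) (ev r) = 0 \<longleftrightarrow>
      nat (blowup_exp 12 r m) = nexp P f g r"
    if m: "m \<in> Poly_Mapping.keys (disc f g)" and r: "r \<le> P" for m r
  proof -
    have "Poly_Mapping.lookup N (ev r) = nexp P f g r"
      unfolding N_def lookup_sum_single_ev using r by (simp add: ev_def)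
    moreover have "Poly_Mapping.lookup (blowup_mono 12 P m) (ev r) = nat (blowup_exp 12 r m)"
      using exact m r by (simp add: lookup_blowup_mono_ev blowup_exact_def)
    ultimately show ?thesis
      using nexp_le[OF exact r m] by (simp add: lookup_minus)
  qed
  have "\<not> special_fiber P f g p \<longleftrightarrow> (\<exists>m\<in>Poly_Mapping.keys (disc f g).
      Poly_Mapping.lookup (blowup_mono 12 P m - N) (ev p) = 0 \<and>
      Poly_Mapping.lookup (blowup_mono 12 P m - N) (ev (Suc p)) = 0)"
    unfolding special_fiber_def keys by (simp add: image_iff)
  also have "\<dots> \<longleftrightarrow> (\<exists>m\<in>Poly_Mapping.keys (disc f g).
       nat (blowup_exp 12 p m) = nexp P f g p \<and> nat (blowup_exp 12 (Suc p) m) = nexp P f g (Suc p))"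
    using p by (intro bex_cong) (simp_all add: zero)
  finally show ?thesis .
qed

definition bc_mono :: "nat \<Rightarrow> mono \<Rightarrow> mono" where
  "bc_mono k m = m + Poly_Mapping.single (ev 0) ((k - 1) * Poly_Mapping.lookup m (ev 0))"

lemma bc_eq_relabel: "bc k F = relabel (bc_mono k) F"
  unfolding bc_def bc_mono_def ..

lemma lookup_bc_mono:
  "k > 0 \<Longrightarrow> Poly_Mapping.lookup (bc_mono k m) z =
     (if z = 2 then k * Poly_Mapping.lookup m 2 else Poly_Mapping.lookup m z)"
  by (cases k) (auto simp: bc_mono_def lookup_add lookup_single ev_def when_def numeral_2_eq_2)

lemma inj_bc_mono: "k > 0 \<Longrightarrow> inj (bc_mono k)"
proof (rule injI, rule poly_mapping_eqI)
  fix x y z assume k: "k > 0" and eq: "bc_mono k x = bc_mono k y"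
  from arg_cong[OF eq, of "\<lambda>m. Poly_Mapping.lookup m z"] k
  show "Poly_Mapping.lookup x z = Poly_Mapping.lookup y z"
    by (simp add: lookup_bc_mono split: if_splits)
qed

lemma disc_bc: "disc (bc k f) (bc k g) = bc k (disc f g)"
  unfolding bc_eq_relabel
  by (rule relabel_disc[symmetric]) (simp_all add: bc_mono_def lookup_add distrib_left single_add add_ac)

lemma keys_bc: "k > 0 \<Longrightarrow> Poly_Mapping.keys (bc k F) = bc_mono k ` Poly_Mapping.keys F"
  unfolding bc_eq_relabel by (simp add: keys_relabel_inj inj_on_subset[OF inj_bc_mono])

lemma blowup_exp_bc_mono:
  assumes "k > 0" "r \<le> k"
  shows "blowup_exp w (k * p + r) (bc_mono k m)
    = int (k - r) * blowup_exp w p m + int r * blowup_exp w (Suc p) m"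
  using assms by (simp add: blowup_exp_def lookup_bc_mono algebra_simps)

lemma nat_blowup_exp_bc_mono:
  assumes "k > 0" "r \<le> k" "0 \<le> blowup_exp w p m" "0 \<le> blowup_exp w (Suc p) m"
  shows "nat (blowup_exp w (k * p + r) (bc_mono k m))
    = (k - r) * nat (blowup_exp w p m) + r * nat (blowup_exp w (Suc p) m)"
  using assms by (simp add: blowup_exp_bc_mono nat_add_distrib nat_mult_distrib del: of_nat_diff)

lemma blowup_exact_bc:
  assumes k: "k > 0" and exact: "blowup_exact w P F"
  shows "blowup_exact w (k * P) (bc k F)"
proof -
  have "blowup_exp w (k * P) (bc_mono k m) = int k * blowup_exp w P m" for m
    using blowup_exp_bc_mono[OF k, of 0 w P m] by simp
  then show ?thesis
    using exact k unfolding blowup_exact_def keys_bc[OF k]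
    by (auto simp: stu_mono_def lookup_bc_mono)
qed

lemma nexp_bc:
  assumes exact: "blowup_exact 12 P (disc f g)" and k: "k > 0" and p: "p < P" and r: "r \<le> k"
    and m0: "m0 \<in> Poly_Mapping.keys (disc f g)"
    and min_p: "nat (blowup_exp 12 p m0) = nexp P f g p"
    and min_Suc_p: "nat (blowup_exp 12 (Suc p) m0) = nexp P f g (Suc p)"
  shows "nexp (k * P) (bc k f) (bc k g) (k * p + r) = (k - r) * nexp P f g p + r * nexp P f g (Suc p)"
proof -
  let ?S = "Poly_Mapping.keys (disc f g)"
  let ?X = "\<lambda>q m. nat (blowup_exp 12 q m)"
  have nonneg: "0 \<le> blowup_exp 12 q m" if "m \<in> ?S" "q \<le> P" for q m
    using exact that blowup_exp_nonneg_le by (auto simp: blowup_exact_def)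
  have "k * p + r \<le> k * P"
    using p r mult_le_mono2[of "Suc p" P k] by simp
  then have "nexp (k * P) (bc k f) (bc k g) (k * p + r) = Min ((\<lambda>m. ?X (k * p + r) (bc_mono k m)) ` ?S)"
    using blowup_exact_bc[OF k exact]
    by (simp add: disc_bc nexp_eq_Min keys_bc[OF k] image_image)
  also have "\<dots> = Min ((\<lambda>m. (k - r) * ?X p m + r * ?X (Suc p) m) ` ?S)"
    using nonneg p by (intro arg_cong[where f = Min] image_cong) (auto simp: nat_blowup_exp_bc_mono k r)
  also have "\<dots> = (k - r) * ?X p m0 + r * ?X (Suc p) m0"
    using m0 p min_p min_Suc_p nexp_le[OF exact]
    by (intro Min_lincomb_at_common_minimizer) auto
  finally show ?thesis using min_p min_Suc_p by simp
qed

theorem lemma1: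
  fixes f g :: mpoly and P p :: nat and a b :: enat
  assumes hf: "stu_homog 8 f" and hg: "stu_homog 12 g"
    and ha: "a = ord_s f" and hb: "b = ord_s g"
    and hab: "\<not> (a \<ge> 4 \<and> b \<ge> 6)"
    and hD: "disc f g \<noteq> 0"
    and hcls: "\<forall>l::nat. l \<ge> 1 \<longrightarrow> class_cond (bc l f) (bc l g)"
    and hP: "drop_cond f g P" and hPmin: "\<forall>q<P. \<not> drop_cond f g q"
    and hst: "standing f g P"
    and hp: "p < P"
    and hnsf: "\<not> special_fiber P f g p"
  shows "\<forall>k::nat. k > 0 \<longrightarrow>
     (\<forall>r\<le>k. nexp (k * P) (bc k f) (bc k g) (k * p + r)
              = (k - r) * nexp P f g p + r * nexp P f g (Suc p)) \<and>
     (\<forall>pb. k * p \<le> pb \<and> pb < k * (Suc p) \<longrightarrow> \<not> special_fiber (k * P) (bc k f) (bc k g) pb)"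
proof (rule allI, rule impI, rule conjI)
  fix k :: nat assume k: "k > 0"
  have "blowup_exact 4 P f" "blowup_exact 6 P g"
    using hPmin by (auto intro!: blowup_exact_before_drop hf hg simp: drop_cond_def)
  then have exact: "blowup_exact 12 P (disc f g)" by (rule blowup_exact_disc)
  then have exact_bc: "blowup_exact 12 (k * P) (disc (bc k f) (bc k g))"
    by (simp add: disc_bc blowup_exact_bc k)
  from hnsf[unfolded not_special_fiber_iff[OF exact hp]]
  obtain m0 where m0: "m0 \<in> Poly_Mapping.keys (disc f g)"
    and min: "nat (blowup_exp 12 p m0) = nexp P f g p"
       "nat (blowup_exp 12 (Suc p) m0) = nexp P f g (Suc p)"
    by blast
  note nexp_bar = nexp_bc[OF exact k hp _ m0 min]
  then show "\<forall>r\<le>k. nexp (k * P) (bc k f) (bc k g) (k * p + r)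
      = (k - r) * nexp P f g p + r * nexp P f g (Suc p)" by blast
  have "0 \<le> blowup_exp 12 p m0" "0 \<le> blowup_exp 12 (Suc p) m0"
    using exact m0 hp blowup_exp_nonneg_le by (auto simp: blowup_exact_def)
  then have min_bar: "nat (blowup_exp 12 (k * p + r) (bc_mono k m0)) = nexp (k * P) (bc k f) (bc k g) (k * p + r)"
    if "r \<le> k" for r
    by (simp add: nat_blowup_exp_bc_mono[OF k that] nexp_bar[OF that] min)
  have key: "bc_mono k m0 \<in> Poly_Mapping.keys (disc (bc k f) (bc k g))"
    by (simp add: disc_bc keys_bc[OF k] m0)
  show "\<forall>pb. k * p \<le> pb \<and> pb < k * Suc p \<longrightarrow> \<not> special_fiber (k * P) (bc k f) (bc k g) pb"
  proof (intro allI impI)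
    fix pb assume pb: "k * p \<le> pb \<and> pb < k * Suc p"
    define r where "r = pb - k * p"
    have r: "r < k" "pb = k * p + r" using pb by (auto simp: r_def)
    have "pb < k * P" using r hp mult_le_mono2[of "Suc p" P k] by simp
    moreover have "nat (blowup_exp 12 pb (bc_mono k m0)) = nexp (k * P) (bc k f) (bc k g) pb"
      "nat (blowup_exp 12 (Suc pb) (bc_mono k m0)) = nexp (k * P) (bc k f) (bc k g) (Suc pb)"
      using min_bar[of r] min_bar[of "Suc r"] r by simp_all
    ultimately show "\<not> special_fiber (k * P) (bc k f) (bc k g) pb"
      using key not_special_fiber_iff[OF exact_bc] by blast
  qed
qed

end
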